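(* Let $f$ be a positive function with $f(u)\to0$ as $u\to\infty$ which is eventually $C^1$, decreasing, and strictly convex. Suppose that either $f$ is regularly varying of index $-\alpha$ for some $0<\alpha\le 1$ (i.e. $f(\lambda u)/f(u)\to\lambda^{-\alpha}$ as $u\to\infty$ for every $\lambda>0$), or $f$ is slowly varying (i.e. $f(\lambda u)/f(u)\to1$ for every $\lambda>0$) and satisfies $\limsup_{u\to\infty}\frac{|f'((1+\delta)u)|}{|f'(u)|}<1$ for every $\delta>0$. Then for every $\lambda>1$ there exist $\delta>0$ and $x_0\ge1$ such that for all $x\ge x_0$ and all $u$ with $u\ge\lambda u_0(x)$ or $u\le(1/\lambda)u_0(x)$, \[h(u,x)-uf(u)\ge\omega(x)+\delta u_0(x).\]
   Context: $h(u,x)=f(u)\log x+u$, $\omega(x)=\inf_{u\ge0}h(u,x)$, and for $x$ sufficiently large $u_0(x)$ denotes the unique point at which $u\mapsto h(u,x)$ attains its minimum (the unique solution of $f'(u)=-1/\log x$), so $\omega(x)=h(u_0(x),x)$. *)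

theory Defs
  imports "HOL-Analysis.Analysis"
begin

definition h :: "(real \<Rightarrow> real) \<Rightarrow> real \<Rightarrow> real \<Rightarrow> real" where
  "h f u x = f u * ln x + u"

definition omega :: "(real \<Rightarrow> real) \<Rightarrow> real \<Rightarrow> real" where
  "omega f x = (INF u\<in>{0..}. h f u x)"

definition u0 :: "(real \<Rightarrow> real) \<Rightarrow> real \<Rightarrow> real" where
  "u0 f x = (THE u. u \<ge> 0 \<and> (\<forall>v\<ge>0. h f u x \<le> h f v x))"

definition strictly_convex_on :: "real set \<Rightarrow> (real \<Rightarrow> real) \<Rightarrow> bool" where
  "strictly_convex_on S f \<longleftrightarrow> convex S \<and>
     (\<forall>x\<in>S. \<forall>y\<in>S. \<forall>t. x \<noteq> y \<and> 0 < t \<and> t < 1 \<longrightarrow>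
        f ((1 - t) * x + t * y) < (1 - t) * f x + t * f y)"

definition regularly_varying :: "real \<Rightarrow> (real \<Rightarrow> real) \<Rightarrow> bool" where
  "regularly_varying \<alpha> f \<longleftrightarrow>
     (\<forall>l>0. ((\<lambda>u. f (l * u) / f u) \<longlongrightarrow> l powr (- \<alpha>)) at_top)"

definition slowly_varying :: "(real \<Rightarrow> real) \<Rightarrow> bool" where
  "slowly_varying f \<longleftrightarrow> (\<forall>l>0. ((\<lambda>u. f (l * u) / f u) \<longlongrightarrow> 1) at_top)"

end

theory Submission
  imports Defs
begin

text \<open>
  For large \<open>x\<close> the minimiser \<open>u\<^sub>0(x)\<close> of \<open>h(\<cdot>, x)\<close> satisfies Fermat's rule
  \<open>-f'(u\<^sub>0) ln x = 1\<close>. The variation hypothesis makes the secants of \<open>f\<close> over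
  \<open>[u\<^sub>0, \<lambda>u\<^sub>0]\<close> and \<open>[u\<^sub>0/\<lambda>, u\<^sub>0]\<close> a fixed proportion flatter, resp. steeper, than
  the tangent at \<open>u\<^sub>0\<close>; multiplied by \<open>ln x\<close> this says that \<open>h(\<lambda>u\<^sub>0, x)\<close> and
  \<open>h(u\<^sub>0/\<lambda>, x)\<close> exceed \<open>\<omega>(x)\<close> by a fixed multiple of \<open>u\<^sub>0\<close>, and convexity of
  \<open>h(\<cdot>, x)\<close> carries this gain to every \<open>u\<close> outside \<open>[u\<^sub>0/\<lambda>, \<lambda>u\<^sub>0]\<close>. The correction
  \<open>u f(u)\<close> is \<open>o(u)\<close> because \<open>f \<rightarrow> 0\<close>. Small \<open>u\<close>, where \<open>f\<close> need not be convex, are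
  handled by \<open>\<omega>(x) = o(ln x)\<close>. Since \<open>f\<close> is only eventually convex, \<open>u\<^sub>0\<close> may also stay
  bounded; then \<open>\<omega>\<close> and \<open>u\<^sub>0\<close> converge to a common positive limit, which gives the
  claim directly.
\<close>

section \<open>Convex functions of a real variable\<close>

lemma strictly_convex_onD:
  "strictly_convex_on S f \<Longrightarrow> x \<in> S \<Longrightarrow> y \<in> S \<Longrightarrow> x \<noteq> y \<Longrightarrow> 0 < t \<Longrightarrow> t < 1 \<Longrightarrow>
    f ((1 - t) * x + t * y) < (1 - t) * f x + t * f y"
  unfolding strictly_convex_on_def by blast

lemma strictly_convex_on_imp_convex_on:
  "strictly_convex_on S f \<Longrightarrow> convex_on S f"
  unfolding strictly_convex_on_def
  by (intro convex_on_linorderI) (auto intro: less_imp_le)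

lemma convex_on_ray_above_tangent:
  fixes f :: "real \<Rightarrow> real"
  assumes "convex_on {U<..} f" "U < u" "U < v" "(f has_real_derivative f') (at u)"
  shows "f u + f' * (v - u) \<le> f v"
  using convex_on_imp_above_tangent[OF assms(1), of u v f'] assms(2-4)
    has_field_derivative_at_within[OF assms(4)]
  by (auto simp: interior_open)

lemma strictly_convex_antimono_deriv_neg:
  fixes f :: "real \<Rightarrow> real"
  assumes sc: "strictly_convex_on {U<..} f" and anti: "\<And>v. u \<le> v \<Longrightarrow> f v \<le> f u"
    and u: "U < u" and f': "(f has_real_derivative f') (at u)"
  shows "f' < 0"
proof (rule ccontr)
  assume "\<not> f' < 0"
  then have "f u \<le> f (u + 1)"
    using convex_on_ray_above_tangent[OF strictly_convex_on_imp_convex_on[OF sc] u _ f', of "u + 1"] u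
    by auto
  moreover have "f (u + 1) < (f u + f (u + 2)) / 2"
  proof -
    have "(1 - 1/2) * u + 1/2 * (u + 2) = u + 1"
      by (simp add: field_simps)
    then show ?thesis
      using strictly_convex_onD[OF sc, of u "u + 2" "1/2"] u by simp
  qed
  ultimately show False
    using anti[of "u + 2"] by simp
qed

lemma convex_on_chord_slope_mono:
  fixes G :: "real \<Rightarrow> real"
  assumes "convex_on {U<..} G" "U < a" "a < b" "b \<le> u"
  shows "(G b - G a) / (b - a) \<le> (G u - G a) / (u - a)"
proof (cases "b = u")
  case False
  then have "(G a - G b) / (a - b) \<le> (G a - G u) / (a - u)"
    using assms by (intro convex_on_slope_le(1)[OF assms(1)]) auto
  then show ?thesis
    by (metis minus_diff_eq minus_divide_divide)
qed simp

lemma filterlim_divide_const_at_top: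
  fixes c :: real
  assumes "0 < c"
  shows "filterlim (\<lambda>u. u / c) at_top at_top"
  using filterlim_tendsto_pos_mult_at_top[OF tendsto_const[of "1 / c"] _ filterlim_ident] assms
  by simp

lemma eventually_gt_divide_at_top:
  fixes c :: real
  assumes "0 < c"
  shows "\<forall>\<^sub>F u in at_top. a < u / c"
  using eventually_compose_filterlim[OF eventually_gt_at_top filterlim_divide_const_at_top[OF assms]] .

lemma eventually_ge_ln_at_top: "\<forall>\<^sub>F x in at_top. c \<le> ln (x :: real)"
  using eventually_compose_filterlim[OF eventually_ge_at_top ln_at_top] .

lemma eventually_at_top_imp_ex_ge:
  fixes a :: "'a :: linorder"
  assumes "eventually P at_top"
  shows "\<exists>x0\<ge>a. \<forall>x\<ge>x0. P x"
proof -
  obtain N where "\<And>x. N \<le> x \<Longrightarrow> P x"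
    using assms by (auto simp: eventually_at_top_linorder)
  then show ?thesis
    by (intro exI[of _ "max N a"]) auto
qed

lemma eventually_less_of_Limsup_less:
  fixes g :: "'a \<Rightarrow> real"
  assumes "Limsup F (\<lambda>x. ereal (g x)) < ereal c"
  shows "\<exists>r<c. \<forall>\<^sub>F x in F. g x < r"
proof -
  obtain r where "Limsup F (\<lambda>x. ereal (g x)) < ereal r" "r < c"
    using ereal_dense2[OF assms] by auto
  then show ?thesis
    using Limsup_lessD by fastforce
qed

lemma tendsto_SUP_of_mono_bounded:
  fixes g :: "real \<Rightarrow> real"
  assumes mono: "\<And>x y. a \<le> x \<Longrightarrow> x \<le> y \<Longrightarrow> g x \<le> g y" and bdd: "\<And>x. a \<le> x \<Longrightarrow> g x \<le> B"
  shows "(g \<longlongrightarrow> (SUP x\<in>{a..}. g x)) at_top"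
proof (rule increasing_tendsto)
  have "bdd_above (g ` {a..})"
    using bdd by (intro bdd_aboveI2) auto
  show "\<forall>\<^sub>F x in at_top. g x \<le> (SUP x\<in>{a..}. g x)"
    using eventually_ge_at_top[of a]
    by eventually_elim (auto intro: cSUP_upper \<open>bdd_above (g ` {a..})\<close>)
  fix l assume "l < (SUP x\<in>{a..}. g x)"
  then obtain x where x: "a \<le> x" "l < g x"
    using less_cSUP_iff[OF _ \<open>bdd_above (g ` {a..})\<close>] by auto
  show "\<forall>\<^sub>F y in at_top. l < g y"
    using eventually_ge_at_top[of x] by eventually_elim (use x mono in force)
qed

lemma antimono_tendsto_zero_mult_le:
  fixes f :: "real \<Rightarrow> real"
  assumes anti: "\<And>u v. T \<le> u \<Longrightarrow> u \<le> v \<Longrightarrow> f v \<le> f u" and "0 \<le> T"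
    and "(f \<longlongrightarrow> 0) at_top" and "0 < \<eta>"
  shows "\<exists>C. \<forall>u\<ge>T. u * f u \<le> \<eta> * u + C"
proof -
  obtain N where N: "\<And>u. N \<le> u \<Longrightarrow> f u < \<eta>"
    using order_tendstoD(2)[OF assms(3,4)] by (auto simp: eventually_at_top_linorder)
  define S where "S = max N T"
  show ?thesis
  proof (intro exI allI impI)
    fix u assume "T \<le> u"
    then have "0 \<le> \<eta> * u" "0 \<le> S * \<bar>f T\<bar>"
      using \<open>0 \<le> T\<close> \<open>0 < \<eta>\<close> by (simp_all add: S_def)
    show "u * f u \<le> \<eta> * u + S * \<bar>f T\<bar>"
    proof (cases "S \<le> u")
      case True
      then have "u * f u \<le> u * \<eta>"
        using N[of u] \<open>T \<le> u\<close> \<open>0 \<le> T\<close> by (intro mult_left_mono) (auto simp: S_def)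
      then show ?thesis
        using \<open>0 \<le> S * \<bar>f T\<bar>\<close> by (simp add: mult.commute)
    next
      case False
      have "u * f u \<le> u * \<bar>f T\<bar>"
        using anti[OF order_refl \<open>T \<le> u\<close>] \<open>T \<le> u\<close> \<open>0 \<le> T\<close> by (intro mult_left_mono) auto
      also have "\<dots> \<le> S * \<bar>f T\<bar>"
        using False by (intro mult_right_mono) auto
      finally show ?thesis
        using \<open>0 \<le> \<eta> * u\<close> by linarith
    qed
  qed
qed

section \<open>Secants of regularly varying and of geometrically flattening functions\<close>

lemma regularly_varyingD:
  "regularly_varying \<alpha> f \<Longrightarrow> 0 < l \<Longrightarrow> ((\<lambda>u. f (l * u) / f u) \<longlongrightarrow> l powr - \<alpha>) at_top"
  unfolding regularly_varying_def by blast

lemma regularly_varying_divide: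
  assumes "regularly_varying \<alpha> f" "0 < l"
  shows "((\<lambda>u. f (u / l) / f u) \<longlongrightarrow> l powr \<alpha>) at_top"
  using regularly_varyingD[OF assms(1), of "1 / l"] assms(2)
  by (simp add: powr_minus_divide powr_divide)

lemma regularly_varying_diff_ratio_upper:
  assumes rv: "regularly_varying \<alpha> f" and "0 < \<alpha>" "1 < \<mu>" and pos: "\<forall>\<^sub>F u in at_top. 0 < f u"
    and c: "1 + \<mu> powr - \<alpha> < c"
  shows "\<forall>\<^sub>F u in at_top. f u - f (\<mu> * \<mu> * u) < c * (f u - f (\<mu> * u))"
proof -
  define p where "p = \<mu> powr - \<alpha>"
  have "p < 1"
    using assms by (simp add: p_def powr_less_one)
  have "(\<mu> * \<mu>) powr - \<alpha> = p * p"
    using \<open>1 < \<mu>\<close> by (simp add: p_def powr_mult)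
  then have "((\<lambda>u. c * (1 - f (\<mu> * u) / f u) - (1 - f (\<mu> * \<mu> * u) / f u))
      \<longlongrightarrow> c * (1 - p) - (1 - p * p)) at_top"
    using regularly_varyingD[OF rv, of \<mu>] regularly_varyingD[OF rv, of "\<mu> * \<mu>"] \<open>1 < \<mu>\<close>
    by (auto simp: p_def intro!: tendsto_intros)
  moreover have "c * (1 - p) - (1 - p * p) = (1 - p) * (c - 1 - p)"
    by (simp add: algebra_simps)
  then have "0 < c * (1 - p) - (1 - p * p)"
    using \<open>p < 1\<close> c by (simp add: p_def)
  ultimately have "\<forall>\<^sub>F u in at_top. 0 < c * (1 - f (\<mu> * u) / f u) - (1 - f (\<mu> * \<mu> * u) / f u)"
    by (rule order_tendstoD)
  then show ?thesis
    using pos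
  proof eventually_elim
    case (elim u)
    then have "0 < (c * (1 - f (\<mu> * u) / f u) - (1 - f (\<mu> * \<mu> * u) / f u)) * f u"
      by simp
    also have "\<dots> = c * (f u - f (\<mu> * u)) - (f u - f (\<mu> * \<mu> * u))"
      using elim by (simp add: field_simps)
    finally show ?case
      by simp
  qed
qed

lemma regularly_varying_diff_ratio_lower:
  assumes rv: "regularly_varying \<alpha> f" and "0 < \<alpha>" "1 < \<mu>" and pos: "\<forall>\<^sub>F u in at_top. 0 < f u"
    and c: "c < 1 + \<mu> powr \<alpha>"
  shows "\<forall>\<^sub>F u in at_top. c * (f (u / \<mu>) - f u) < f (u / (\<mu> * \<mu>)) - f u"
proof -
  define q where "q = \<mu> powr \<alpha>"
  have "1 < q"
    using assms by (simp add: q_def)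
  have "(\<mu> * \<mu>) powr \<alpha> = q * q"
    using \<open>1 < \<mu>\<close> by (simp add: q_def powr_mult)
  then have "((\<lambda>u. (f (u / (\<mu> * \<mu>)) / f u - 1) - c * (f (u / \<mu>) / f u - 1))
      \<longlongrightarrow> (q * q - 1) - c * (q - 1)) at_top"
    using regularly_varying_divide[OF rv, of \<mu>] regularly_varying_divide[OF rv, of "\<mu> * \<mu>"] \<open>1 < \<mu>\<close>
    by (auto simp: q_def intro!: tendsto_intros)
  moreover have "(q * q - 1) - c * (q - 1) = (q - 1) * (q + 1 - c)"
    by (simp add: algebra_simps)
  then have "0 < (q * q - 1) - c * (q - 1)"
    using \<open>1 < q\<close> c by (simp add: q_def)
  ultimately have "\<forall>\<^sub>F u in at_top. 0 < (f (u / (\<mu> * \<mu>)) / f u - 1) - c * (f (u / \<mu>) / f u - 1)"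
    by (rule order_tendstoD)
  then show ?thesis
    using pos
  proof eventually_elim
    case (elim u)
    then have "0 < ((f (u / (\<mu> * \<mu>)) / f u - 1) - c * (f (u / \<mu>) / f u - 1)) * f u"
      by simp
    also have "\<dots> = (f (u / (\<mu> * \<mu>)) - f u) - c * (f (u / \<mu>) - f u)"
      using elim by (simp add: field_simps)
    finally show ?case
      by simp
  qed
qed

text \<open>
  For the secant over \<open>[u, \<lambda>u]\<close> compare with the secant over \<open>[u, \<mu>u]\<close>, \<open>\<mu> = \<surd>\<lambda>\<close>: their ratio
  tends to \<open>1 + \<mu>\<^sup>-\<^sup>\<alpha>\<close>, less than the ratio \<open>1 + \<mu>\<close> of the interval lengths, and the
  shorter secant is bounded by the tangent. Symmetrically for \<open>[u/\<lambda>, u]\<close>.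
\<close>

lemma regularly_varying_secant_le:
  fixes f f' :: "real \<Rightarrow> real"
  assumes rv: "regularly_varying \<alpha> f" and \<alpha>: "0 < \<alpha>" and lam: "1 < lam"
    and pos: "\<forall>\<^sub>F u in at_top. 0 < f u"
    and tangent: "\<And>u v. U < u \<Longrightarrow> U < v \<Longrightarrow> f u + f' u * (v - u) \<le> f v"
  shows "\<exists>\<sigma>>0. \<forall>\<^sub>F u in at_top. f u - f (lam * u) \<le> (1 - \<sigma>) * (lam - 1) * u * - f' u"
proof -
  define \<mu> where "\<mu> = sqrt lam"
  define p where "p = \<mu> powr - \<alpha>"
  define \<sigma> where "\<sigma> = (\<mu> - p) / (2 * (\<mu> + 1))"
  have \<mu>: "1 < \<mu>" "\<mu> * \<mu> = lam"
    using lam by (auto simp: \<mu>_def)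
  have p: "0 < p" "p < 1"
    using \<mu> \<alpha> by (auto simp: p_def powr_less_one)
  have "(1 - \<sigma>) * (\<mu> + 1) = (\<mu> + 2 + p) / 2"
    using \<mu>(1) by (simp add: \<sigma>_def divide_simps) (simp add: algebra_simps)
  then have "1 + p < (1 - \<sigma>) * (\<mu> + 1)"
    using \<mu> p by simp
  then have ratio: "\<forall>\<^sub>F u in at_top. f u - f (lam * u) < (1 - \<sigma>) * (\<mu> + 1) * (f u - f (\<mu> * u))"
    using regularly_varying_diff_ratio_upper[OF rv \<alpha> \<mu>(1) pos, of "(1 - \<sigma>) * (\<mu> + 1)"]
    by (simp add: p_def \<mu>(2))
  have secant: "\<forall>\<^sub>F u in at_top. f u - f (\<mu> * u) \<le> (\<mu> - 1) * u * - f' u"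
    using eventually_gt_at_top[of "max U 0"]
  proof eventually_elim
    case (elim u)
    then have "U < \<mu> * u"
      using \<mu> by (smt (verit) mult_le_cancel_right1)
    then show ?case
      using tangent[of u "\<mu> * u"] elim by (simp add: algebra_simps)
  qed
  have "0 < \<sigma>" "\<sigma> < 1"
    using \<mu> p by (simp_all add: \<sigma>_def)
  have "0 \<le> (1 - \<sigma>) * (\<mu> + 1)"
    using \<open>\<sigma> < 1\<close> \<mu> by simp
  have "\<forall>\<^sub>F u in at_top. f u - f (lam * u) \<le> (1 - \<sigma>) * (lam - 1) * u * - f' u"
    using ratio secant
  proof eventually_elim
    case (elim u)
    have "f u - f (lam * u) \<le> (1 - \<sigma>) * (\<mu> + 1) * ((\<mu> - 1) * u * - f' u)"
      using less_le_trans[OF elim(1) mult_left_mono[OF elim(2) \<open>0 \<le> (1 - \<sigma>) * (\<mu> + 1)\<close>]] by simp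
    moreover have "lam - 1 = (\<mu> + 1) * (\<mu> - 1)"
      by (simp add: algebra_simps flip: \<mu>(2))
    ultimately show ?case
      by (simp only: mult.assoc)
  qed
  then show ?thesis
    using \<open>0 < \<sigma>\<close> by blast
qed

lemma regularly_varying_secant_ge:
  fixes f f' :: "real \<Rightarrow> real"
  assumes rv: "regularly_varying \<alpha> f" and \<alpha>: "0 < \<alpha>" and lam: "1 < lam"
    and pos: "\<forall>\<^sub>F u in at_top. 0 < f u"
    and tangent: "\<And>u v. U < u \<Longrightarrow> U < v \<Longrightarrow> f u + f' u * (v - u) \<le> f v"
  shows "\<exists>\<sigma>>0. \<forall>\<^sub>F u in at_top. (1 + \<sigma>) * (1 - 1 / lam) * u * - f' u \<le> f (u / lam) - f u"
proof -
  define \<mu> where "\<mu> = sqrt lam"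
  define q where "q = \<mu> powr \<alpha>"
  define \<sigma> where "\<sigma> = (q * \<mu> - 1) / (2 * (\<mu> + 1))"
  have \<mu>: "1 < \<mu>" "\<mu> * \<mu> = lam"
    using lam by (auto simp: \<mu>_def)
  have "1 < q"
    using \<mu> \<alpha> by (simp add: q_def)
  then have "1 < q * \<mu>"
    using less_1_mult[of q \<mu>] \<mu> by simp
  then have "0 < \<sigma>"
    using \<mu> by (simp add: \<sigma>_def)
  have c_eq: "(1 + \<sigma>) * (1 + 1 / \<mu>) = (q + 2 + 1 / \<mu>) / 2"
    using \<mu>(1) by (simp add: \<sigma>_def divide_simps) (simp add: algebra_simps)
  have "1 / \<mu> < q"
    using \<mu> \<open>1 < q\<close> by (smt (verit) divide_less_eq_1_pos)
  then have "(1 + \<sigma>) * (1 + 1 / \<mu>) < 1 + q"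
    unfolding c_eq by simp
  then have ratio: "\<forall>\<^sub>F u in at_top. (1 + \<sigma>) * (1 + 1 / \<mu>) * (f (u / \<mu>) - f u) < f (u / lam) - f u"
    using regularly_varying_diff_ratio_lower[OF rv \<alpha> \<mu>(1) pos, of "(1 + \<sigma>) * (1 + 1 / \<mu>)"]
    by (simp add: q_def \<mu>(2))
  have "\<forall>\<^sub>F u in at_top. max U 0 < u / \<mu>"
    using \<mu> by (intro eventually_gt_divide_at_top) simp
  then have secant: "\<forall>\<^sub>F u in at_top. (1 - 1 / \<mu>) * u * - f' u \<le> f (u / \<mu>) - f u"
  proof eventually_elim
    case (elim u)
    moreover have "u / \<mu> \<le> u"
      using elim \<mu> by (simp add: divide_le_eq zero_less_divide_iff)
    ultimately have "U < u / \<mu>" "U < u"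
      by linarith+
    then show ?case
      using tangent[of u "u / \<mu>"] by (simp add: algebra_simps)
  qed
  have "0 \<le> (1 + \<sigma>) * (1 + 1 / \<mu>)"
    using \<open>0 < \<sigma>\<close> \<mu> by simp
  have "\<forall>\<^sub>F u in at_top. (1 + \<sigma>) * (1 - 1 / lam) * u * - f' u \<le> f (u / lam) - f u"
    using ratio secant
  proof eventually_elim
    case (elim u)
    have "(1 + \<sigma>) * (1 + 1 / \<mu>) * ((1 - 1 / \<mu>) * u * - f' u) \<le> f (u / lam) - f u"
      using le_less_trans[OF mult_left_mono[OF elim(2) \<open>0 \<le> (1 + \<sigma>) * (1 + 1 / \<mu>)\<close>] elim(1)] by simp
    moreover have "1 - 1 / lam = (1 + 1 / \<mu>) * (1 - 1 / \<mu>)"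
      using \<mu> by (simp add: field_simps flip: \<mu>(2))
    ultimately show ?case
      by (simp only: mult.assoc)
  qed
  then show ?thesis
    using \<open>0 < \<sigma>\<close> by blast
qed

lemma deriv_ratio_of_Limsup:
  fixes f' :: "real \<Rightarrow> real"
  assumes neg: "\<And>u. U < u \<Longrightarrow> f' u < 0" and "1 \<le> \<mu>"
    and Limsup: "Limsup at_top (\<lambda>u. ereal (\<bar>f' (\<mu> * u)\<bar> / \<bar>f' u\<bar>)) < 1"
  shows "\<exists>\<rho>. 0 < \<rho> \<and> \<rho> < 1 \<and> (\<forall>\<^sub>F u in at_top. - f' (\<mu> * u) \<le> \<rho> * - f' u)"
proof -
  obtain r where "r < 1" and r: "\<forall>\<^sub>F u in at_top. \<bar>f' (\<mu> * u)\<bar> / \<bar>f' u\<bar> < r"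
    using eventually_less_of_Limsup_less[of at_top "\<lambda>u. \<bar>f' (\<mu> * u)\<bar> / \<bar>f' u\<bar>" 1] Limsup
    by (auto simp: one_ereal_def)
  define \<rho> where "\<rho> = max r (1 / 2)"
  have "\<forall>\<^sub>F u in at_top. - f' (\<mu> * u) \<le> \<rho> * - f' u"
    using r eventually_gt_at_top[of "max U 0"]
  proof eventually_elim
    case (elim u)
    have "U < u" "0 < u"
      using elim(2) by auto
    moreover have "u \<le> \<mu> * u"
      using \<open>0 < u\<close> \<open>1 \<le> \<mu>\<close> by simp
    ultimately have "U < \<mu> * u"
      by linarith
    then have "f' (\<mu> * u) < 0" "f' u < 0"
      using neg \<open>U < u\<close> by auto
    then have "- f' (\<mu> * u) / - f' u < \<rho>"
      using elim(1) by (simp add: \<rho>_def)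
    then show ?case
      using \<open>f' u < 0\<close> by (simp add: divide_less_eq)
  qed
  moreover have "0 < \<rho>" "\<rho> < 1"
    using \<open>r < 1\<close> by (auto simp: \<rho>_def)
  ultimately show ?thesis
    by blast
qed

text \<open>
  Split \<open>[u, \<lambda>u]\<close> at \<open>\<mu>u\<close>: the tangent at \<open>u\<close> bounds the first secant, and the tangent at
  \<open>\<mu>u\<close>, whose slope is a factor \<open>\<rho> < 1\<close> smaller, bounds the second.
\<close>

lemma deriv_ratio_secant_le:
  fixes f f' :: "real \<Rightarrow> real"
  assumes \<mu>: "1 < \<mu>" "\<mu> < lam" and \<rho>: "\<rho> < 1"
    and ratio: "\<forall>\<^sub>F u in at_top. - f' (\<mu> * u) \<le> \<rho> * - f' u"
    and tangent: "\<And>u v. U < u \<Longrightarrow> U < v \<Longrightarrow> f u + f' u * (v - u) \<le> f v"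
  shows "\<exists>\<sigma>>0. \<forall>\<^sub>F u in at_top. f u - f (lam * u) \<le> (1 - \<sigma>) * (lam - 1) * u * - f' u"
proof -
  define \<sigma> where "\<sigma> = (1 - \<rho>) * (lam - \<mu>) / (lam - 1)"
  have "\<forall>\<^sub>F u in at_top. f u - f (lam * u) \<le> (1 - \<sigma>) * (lam - 1) * u * - f' u"
    using ratio eventually_gt_at_top[of "max U 0"]
  proof eventually_elim
    case (elim u)
    then have "U < u" "U < \<mu> * u" "U < lam * u"
      using \<mu> by (auto intro: less_le_trans[of U u] simp: mult_le_cancel_right1)
    then have "f u - f (\<mu> * u) \<le> (\<mu> - 1) * u * - f' u"
      and "f (\<mu> * u) - f (lam * u) \<le> (lam - \<mu>) * u * - f' (\<mu> * u)"
      using tangent[of u "\<mu> * u"] tangent[of "\<mu> * u" "lam * u"] by (simp_all add: algebra_simps)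
    moreover have "(lam - \<mu>) * u * - f' (\<mu> * u) \<le> (lam - \<mu>) * u * (\<rho> * - f' u)"
      using elim \<mu> by (intro mult_left_mono) auto
    moreover have "(\<mu> - 1) * u * - f' u + (lam - \<mu>) * u * (\<rho> * - f' u)
        = (1 - \<sigma>) * (lam - 1) * u * - f' u"
      using \<mu> by (simp add: \<sigma>_def field_simps)
    ultimately show ?case
      by linarith
  qed
  moreover have "0 < \<sigma>"
    using \<mu> \<rho> by (simp add: \<sigma>_def)
  ultimately show ?thesis
    by blast
qed

lemma deriv_ratio_secant_ge:
  fixes f f' :: "real \<Rightarrow> real"
  assumes \<mu>: "1 < \<mu>" "\<mu> < lam" and \<rho>: "0 < \<rho>" "\<rho> < 1"
    and ratio: "\<forall>\<^sub>F u in at_top. - f' (\<mu> * u) \<le> \<rho> * - f' u"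
    and tangent: "\<And>u v. U < u \<Longrightarrow> U < v \<Longrightarrow> f u + f' u * (v - u) \<le> f v"
  shows "\<exists>\<sigma>>0. \<forall>\<^sub>F u in at_top. (1 + \<sigma>) * (1 - 1 / lam) * u * - f' u \<le> f (u / lam) - f u"
proof -
  define \<sigma> where "\<sigma> = (1 / \<rho> - 1) * (1 / \<mu> - 1 / lam) / (1 - 1 / lam)"
  have "\<forall>\<^sub>F u in at_top. - f' (\<mu> * (u / \<mu>)) \<le> \<rho> * - f' (u / \<mu>)"
    using \<mu> by (intro eventually_compose_filterlim[OF ratio] filterlim_divide_const_at_top) simp
  moreover have "\<forall>\<^sub>F u in at_top. max U 0 < u / lam"
    using \<mu> by (intro eventually_gt_divide_at_top) simp
  ultimately have "\<forall>\<^sub>F u in at_top. (1 + \<sigma>) * (1 - 1 / lam) * u * - f' u \<le> f (u / lam) - f u"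
  proof eventually_elim
    case (elim u)
    then have "max U 0 < u / lam"
      by simp
    moreover have "0 < u"
      using calculation \<mu> by (simp add: zero_less_divide_iff)
    then have "u / lam \<le> u / \<mu>"
      using \<mu> by (intro divide_left_mono) auto
    moreover have "u / \<mu> \<le> u"
      using \<open>0 < u\<close> \<mu> by (simp add: divide_le_eq)
    ultimately have "U < u" "U < u / \<mu>" "U < u / lam"
      by linarith+
    then have "(1 - 1 / \<mu>) * u * - f' u \<le> f (u / \<mu>) - f u"
      and "(1 / \<mu> - 1 / lam) * u * - f' (u / \<mu>) \<le> f (u / lam) - f (u / \<mu>)"
      using tangent[of u "u / \<mu>"] tangent[of "u / \<mu>" "u / lam"] by (simp_all add: algebra_simps)
    moreover have "(1 / \<mu> - 1 / lam) * u * (- f' u / \<rho>) \<le> (1 / \<mu> - 1 / lam) * u * - f' (u / \<mu>)"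
    proof (rule mult_left_mono)
      show "- f' u / \<rho> \<le> - f' (u / \<mu>)"
        using elim \<mu> \<rho> by (simp add: le_divide_eq mult.commute)
      show "0 \<le> (1 / \<mu> - 1 / lam) * u"
        using \<open>u / lam \<le> u / \<mu>\<close> by (simp add: algebra_simps)
    qed
    moreover have "(1 - 1 / \<mu>) * u * - f' u + (1 / \<mu> - 1 / lam) * u * (- f' u / \<rho>)
        = (1 + \<sigma>) * (1 - 1 / lam) * u * - f' u"
      using \<mu> \<rho> by (simp add: \<sigma>_def field_simps)
    ultimately show ?case
      by linarith
  qed
  moreover have "0 < \<sigma>"
    using \<mu> \<rho> by (simp add: \<sigma>_def frac_less2)
  ultimately show ?thesis
    by blast
qed

lemma secant_bounds_of_variation:
  fixes f f' :: "real \<Rightarrow> real"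
  assumes variation: "(\<exists>\<alpha>>0. regularly_varying \<alpha> f)
      \<or> (\<forall>\<delta>>0. Limsup at_top (\<lambda>u. ereal (\<bar>f' ((1 + \<delta>) * u)\<bar> / \<bar>f' u\<bar>)) < 1)"
    and pos: "\<forall>\<^sub>F u in at_top. 0 < f u"
    and tangent: "\<And>u v. U < u \<Longrightarrow> U < v \<Longrightarrow> f u + f' u * (v - u) \<le> f v"
    and neg: "\<And>u. U < u \<Longrightarrow> f' u < 0"
    and lam: "1 < lam"
  shows "\<exists>\<sigma>\<^sub>1>0. \<exists>\<sigma>\<^sub>2>0. (\<forall>\<^sub>F u in at_top. f u - f (lam * u) \<le> (1 - \<sigma>\<^sub>1) * (lam - 1) * u * - f' u)
           \<and> (\<forall>\<^sub>F u in at_top. (1 + \<sigma>\<^sub>2) * (1 - 1 / lam) * u * - f' u \<le> f (u / lam) - f u)"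
  using variation
proof
  assume "\<exists>\<alpha>>0. regularly_varying \<alpha> f"
  then obtain \<alpha> where \<alpha>: "regularly_varying \<alpha> f" "0 < \<alpha>"
    by blast
  show ?thesis
    using regularly_varying_secant_le[OF \<alpha> lam pos tangent] regularly_varying_secant_ge[OF \<alpha> lam pos tangent]
    by blast
next
  assume "\<forall>\<delta>>0. Limsup at_top (\<lambda>u. ereal (\<bar>f' ((1 + \<delta>) * u)\<bar> / \<bar>f' u\<bar>)) < 1"
  then have "Limsup at_top (\<lambda>u. ereal (\<bar>f' ((1 + (lam - 1) / 2) * u)\<bar> / \<bar>f' u\<bar>)) < 1"
    using lam by simp
  moreover have \<mu>: "1 < 1 + (lam - 1) / 2" "1 + (lam - 1) / 2 < lam"
    using lam by (simp_all add: field_simps)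
  ultimately have "\<exists>\<rho>. 0 < \<rho> \<and> \<rho> < 1 \<and> (\<forall>\<^sub>F u in at_top. - f' ((1 + (lam - 1) / 2) * u) \<le> \<rho> * - f' u)"
    by (intro deriv_ratio_of_Limsup[OF neg]) simp_all
  then obtain \<rho> where "0 < \<rho>" "\<rho> < 1"
    and ratio: "\<forall>\<^sub>F u in at_top. - f' ((1 + (lam - 1) / 2) * u) \<le> \<rho> * - f' u"
    by blast
  show ?thesis
    using deriv_ratio_secant_le[OF \<mu> \<open>\<rho> < 1\<close> ratio tangent]
      deriv_ratio_secant_ge[OF \<mu> \<open>0 < \<rho>\<close> \<open>\<rho> < 1\<close> ratio tangent]
    by blast
qed

section \<open>The minimiser \<open>u0\<close>\<close>

lemma u0_minimiser:
  assumes "\<exists>!u. 0 \<le> u \<and> (\<forall>v\<ge>0. h f u x \<le> h f v x)"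
  shows "0 \<le> u0 f x" "\<And>v. 0 \<le> v \<Longrightarrow> h f (u0 f x) x \<le> h f v x"
  using theI'[OF assms] unfolding u0_def by auto

locale u0_minimising =
  fixes f :: "real \<Rightarrow> real" and X :: real
  assumes exp_le_X: "exp 1 \<le> X"
    and pos: "\<And>u. 0 \<le> u \<Longrightarrow> 0 < f u"
    and tendsto_zero: "(f \<longlongrightarrow> 0) at_top"
    and u0_nonneg: "\<And>x. X \<le> x \<Longrightarrow> 0 \<le> u0 f x"
    and u0_minimal: "\<And>x v. X \<le> x \<Longrightarrow> 0 \<le> v \<Longrightarrow> h f (u0 f x) x \<le> h f v x"
begin

lemma one_le_ln: "X \<le> x \<Longrightarrow> 1 \<le> ln x"
  using exp_le_X by (smt (verit) exp_gt_zero ln_ge_iff)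

lemma omega_eq: "X \<le> x \<Longrightarrow> omega f x = f (u0 f x) * ln x + u0 f x"
  unfolding omega_def using u0_nonneg u0_minimal
  by (subst cInf_eq_minimum[of "h f (u0 f x) x"]) (auto simp: h_def)

lemma omega_le: "X \<le> x \<Longrightarrow> 0 \<le> v \<Longrightarrow> omega f x \<le> f v * ln x + v"
  using omega_eq u0_minimal[of x v] by (simp add: h_def)

lemma u0_less_omega: "X \<le> x \<Longrightarrow> u0 f x < omega f x"
  using omega_eq[of x] pos[OF u0_nonneg] one_le_ln[of x] by simp

lemma u0_sub_less: "X \<le> x \<Longrightarrow> 0 \<le> u \<Longrightarrow> u0 f x - u < f u * ln x"
  using u0_less_omega[of x] omega_le[of x u] by simp

lemma le_h_minus_of_le_ln: "0 \<le> u \<Longrightarrow> u \<le> ln x \<Longrightarrow> u \<le> h f u x - u * f u"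
  using pos[of u] by (simp add: h_def algebra_simps)

lemma gap_weaken:
  assumes "X \<le> x" "\<delta> \<le> c" "omega f x + c * u0 f x \<le> t"
  shows "omega f x + \<delta> * u0 f x \<le> t"
  using assms mult_right_mono[OF assms(2) u0_nonneg[OF assms(1)]] by linarith

lemma gap_of_twice_omega:
  assumes "X \<le> x" "\<delta> \<le> 1" "2 * omega f x \<le> t"
  shows "omega f x + \<delta> * u0 f x \<le> t"
  using gap_weaken[OF assms(1,2)] u0_less_omega[OF assms(1)] assms(3) by simp

lemma u0_mono:
  assumes "X \<le> x" "x \<le> y"
  shows "u0 f x \<le> u0 f y"
proof (cases "x = y")
  case False
  define a b where "a = u0 f x" and "b = u0 f y"
  have "X \<le> y" "0 \<le> a" "0 \<le> b"
    using assms u0_nonneg by (auto simp: a_def b_def)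
  have "ln x < ln y"
    using assms False exp_le_X by (smt (verit) exp_gt_zero ln_less_cancel_iff)
  have min_x: "a - b \<le> (f b - f a) * ln x" and min_y: "(f b - f a) * ln y \<le> a - b"
    using u0_minimal[OF \<open>X \<le> x\<close> \<open>0 \<le> b\<close>] u0_minimal[OF \<open>X \<le> y\<close> \<open>0 \<le> a\<close>]
    by (simp_all add: a_def b_def h_def algebra_simps)
  then have "(f b - f a) * (ln y - ln x) \<le> 0"
    by (simp add: algebra_simps)
  then have "f b - f a \<le> 0"
    using \<open>ln x < ln y\<close> by (simp add: mult_le_0_iff)
  then have "(f b - f a) * ln x \<le> 0"
    using one_le_ln[OF assms(1)] by (simp add: mult_le_0_iff)
  then show ?thesis
    using min_x by (simp add: a_def b_def)
qed simp

lemma omega_mono: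
  assumes "X \<le> x" "x \<le> y"
  shows "omega f x \<le> omega f y"
proof -
  have "X \<le> y" "0 \<le> u0 f y"
    using assms u0_nonneg by auto
  have "omega f x \<le> f (u0 f y) * ln x + u0 f y"
    by (rule omega_le[OF assms(1) \<open>0 \<le> u0 f y\<close>])
  also have "\<dots> \<le> f (u0 f y) * ln y + u0 f y"
    using assms pos[OF \<open>0 \<le> u0 f y\<close>] exp_le_X
    by (smt (verit) exp_gt_zero ln_le_cancel_iff mult_left_mono)
  also have "\<dots> = omega f y"
    using omega_eq[OF \<open>X \<le> y\<close>] by simp
  finally show ?thesis .
qed

lemma omega_le_eps_ln:
  assumes "0 < \<epsilon>"
  shows "\<forall>\<^sub>F x in at_top. omega f x \<le> \<epsilon> * ln x"
proof -
  obtain v where "0 \<le> v" "f v < \<epsilon> / 2"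
    using eventually_happens'[OF _ eventually_conj[OF eventually_ge_at_top[of 0]
        order_tendstoD(2)[OF tendsto_zero, of "\<epsilon> / 2"]]] assms by auto
  show ?thesis
    using eventually_ge_at_top[of X] eventually_ge_ln_at_top[of "2 * v / \<epsilon>"]
  proof eventually_elim
    case (elim x)
    have "omega f x \<le> f v * ln x + v"
      using omega_le[OF elim(1) \<open>0 \<le> v\<close>] .
    also have "\<dots> \<le> \<epsilon> / 2 * ln x + \<epsilon> / 2 * ln x"
      using \<open>f v < \<epsilon> / 2\<close> one_le_ln[OF elim(1)] elim(2) assms
      by (intro add_mono mult_right_mono) (auto simp: field_simps)
    finally show ?case
      by simp
  qed
qed

lemma twice_omega_le_h_minus_small:
  assumes "X \<le> y" "T < u0 f y"
  shows "\<forall>\<^sub>F x in at_top. \<forall>u\<in>{0..T}. 2 * omega f x \<le> h f u x - u * f u"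
proof -
  define c where "c = (u0 f y - T) / ln y"
  have "0 < c" "0 < c / 4"
    using assms one_le_ln[of y] by (simp_all add: c_def)
  have f_ge: "c \<le> f u" if "u \<in> {0..T}" for u
    using u0_sub_less[OF assms(1), of u] that one_le_ln[OF assms(1)] by (simp add: c_def divide_le_eq)
  show ?thesis
    using eventually_ge_at_top[of X] omega_le_eps_ln[OF \<open>0 < c / 4\<close>] eventually_ge_ln_at_top[of "2 * T"]
  proof eventually_elim
    case (elim x)
    show ?case
    proof
      fix u assume u: "u \<in> {0..T}"
      have "c * (ln x / 2) \<le> c * (ln x - T)"
        using elim(3) \<open>0 < c\<close> by (intro mult_left_mono) auto
      also have "\<dots> \<le> f u * (ln x - u)"
        using f_ge[OF u] u elim(3) \<open>0 < c\<close> by (intro mult_mono) auto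
      also have "\<dots> \<le> h f u x - u * f u"
        using u by (simp add: h_def algebra_simps)
      finally show "2 * omega f x \<le> h f u x - u * f u"
        using elim(2) by simp
    qed
  qed
qed

lemma twice_omega_le_h_minus_large:
  "\<forall>\<^sub>F x in at_top. \<forall>u\<ge>ln x. 2 * omega f x \<le> h f u x - u * f u"
proof -
  obtain N where N: "\<And>u. N \<le> u \<Longrightarrow> f u < 1 / 2"
    using order_tendstoD(2)[OF tendsto_zero, of "1 / 2"] by (auto simp: eventually_at_top_linorder)
  show ?thesis
    using eventually_ge_at_top[of X] omega_le_eps_ln[of "1 / 4", simplified] eventually_ge_ln_at_top[of "max N 0"]
  proof eventually_elim
    case (elim x)
    show ?case
    proof safe
      fix u assume "ln x \<le> u"
      then have "0 \<le> u" "f u < 1 / 2"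
        using elim(3) N by auto
      have "u * (1 / 2) \<le> u * (1 - f u)"
        using \<open>0 \<le> u\<close> \<open>f u < 1 / 2\<close> by (intro mult_left_mono) auto
      also have "\<dots> \<le> h f u x - u * f u"
        using pos[OF \<open>0 \<le> u\<close>] elim(3) by (simp add: h_def algebra_simps)
      finally show "2 * omega f x \<le> h f u x - u * f u"
        using elim(2) \<open>ln x \<le> u\<close> by simp
    qed
  qed
qed

lemma omega_bounded:
  assumes bdd: "\<And>x. X \<le> x \<Longrightarrow> u0 f x \<le> B" and "X \<le> x"
  shows "omega f x \<le> B + 1"
proof -
  have "0 < 1 / ln x"
    using one_le_ln[OF \<open>X \<le> x\<close>] by simp
  from eventually_happens'[OF _ eventually_conj[OF eventually_ge_at_top omega_le_eps_ln[OF this]]]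
  obtain y where y: "X \<le> y" "omega f y \<le> 1 / ln x * ln y"
    by auto
  have "f (u0 f y) * ln y \<le> 1 / ln x * ln y"
    using y omega_eq[OF y(1)] u0_nonneg[OF y(1)] by simp
  then have "f (u0 f y) * ln x \<le> 1"
    using one_le_ln[OF y(1)] one_le_ln[OF \<open>X \<le> x\<close>] by (simp add: field_simps)
  then show ?thesis
    using omega_le[OF \<open>X \<le> x\<close> u0_nonneg[OF y(1)]] bdd[OF y(1)] by simp
qed

lemma omega_sub_u0_tendsto_zero:
  assumes omega_lim: "(omega f \<longlongrightarrow> \<Omega>) at_top"
  shows "((\<lambda>x. omega f x - u0 f x) \<longlongrightarrow> 0) at_top"
proof -
  have "((\<lambda>x. omega f (sqrt x)) \<longlongrightarrow> \<Omega>) at_top"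
    using filterlim_compose[OF omega_lim sqrt_at_top] .
  with omega_lim have "((\<lambda>x. omega f x - omega f (sqrt x)) \<longlongrightarrow> \<Omega> - \<Omega>) at_top"
    by (rule tendsto_diff)
  then have upper_lim: "((\<lambda>x. 2 * (omega f x - omega f (sqrt x))) \<longlongrightarrow> 0) at_top"
    by (intro tendsto_mult_right_zero) simp
  have lower: "\<forall>\<^sub>F x in at_top. 0 \<le> omega f x - u0 f x"
    using eventually_ge_at_top[of X] by eventually_elim (simp add: u0_less_omega less_imp_le)
  \<comment> \<open>Testing the minimality of \<open>\<omega>(\<surd>x)\<close> against \<open>u\<^sub>0(x)\<close>.\<close>
  have upper: "\<forall>\<^sub>F x in at_top. omega f x - u0 f x \<le> 2 * (omega f x - omega f (sqrt x))"
    using eventually_ge_at_top[of X] eventually_compose_filterlim[OF eventually_ge_at_top[of X] sqrt_at_top]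
  proof eventually_elim
    case (elim x)
    have "0 \<le> x"
      using elim(1) exp_le_X exp_gt_zero[of 1] by linarith
    then have "2 * omega f (sqrt x) \<le> f (u0 f x) * ln x + 2 * u0 f x"
      using omega_le[OF elim(2) u0_nonneg[OF elim(1)]] by (simp add: ln_sqrt)
    then show ?case
      using omega_eq[OF elim(1)] by (simp add: algebra_simps)
  qed
  show ?thesis
    using tendsto_sandwich[OF lower upper tendsto_const upper_lim] .
qed

lemma bounded_u0_limits:
  assumes bdd: "\<And>x. X \<le> x \<Longrightarrow> u0 f x \<le> B"
  obtains \<Omega> where "0 < \<Omega>" "(omega f \<longlongrightarrow> \<Omega>) at_top" "(u0 f \<longlongrightarrow> \<Omega>) at_top"
    "\<And>x. X \<le> x \<Longrightarrow> omega f x \<le> \<Omega>"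
proof -
  define \<Omega> where "\<Omega> = (SUP x\<in>{X..}. omega f x)"
  have omega_lim: "(omega f \<longlongrightarrow> \<Omega>) at_top"
    unfolding \<Omega>_def using omega_mono omega_bounded[OF bdd] by (rule tendsto_SUP_of_mono_bounded)
  have omega_le: "omega f x \<le> \<Omega>" if "X \<le> x" for x
  proof (rule tendsto_lowerbound[OF omega_lim])
    show "\<forall>\<^sub>F y in at_top. omega f x \<le> omega f y"
      using eventually_ge_at_top[of x] by eventually_elim (rule omega_mono[OF that])
  qed simp
  have "(u0 f \<longlongrightarrow> \<Omega>) at_top"
    using tendsto_diff[OF omega_lim omega_sub_u0_tendsto_zero[OF omega_lim]] by simp
  moreover have "0 < \<Omega>"
    using omega_le[of X] u0_less_omega[of X] u0_nonneg[of X] by simp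
  ultimately show ?thesis
    using that omega_lim omega_le by blast
qed

lemma omega_le_eps_u0:
  assumes bdd: "\<And>x. X \<le> x \<Longrightarrow> u0 f x \<le> B" and "0 < \<epsilon>"
  shows "\<forall>\<^sub>F x in at_top. omega f x \<le> (1 + \<epsilon>) * u0 f x"
proof -
  obtain \<Omega> where "0 < \<Omega>" and omega_lim: "(omega f \<longlongrightarrow> \<Omega>) at_top" and u0_lim: "(u0 f \<longlongrightarrow> \<Omega>) at_top"
    using bounded_u0_limits[OF bdd] by blast
  have "((\<lambda>x. (omega f x - u0 f x) - \<epsilon> * u0 f x) \<longlongrightarrow> 0 - \<epsilon> * \<Omega>) at_top"
    by (intro tendsto_intros omega_sub_u0_tendsto_zero[OF omega_lim] u0_lim)
  moreover have "0 - \<epsilon> * \<Omega> < 0"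
    using \<open>0 < \<epsilon>\<close> \<open>0 < \<Omega>\<close> by simp
  ultimately have "\<forall>\<^sub>F x in at_top. (omega f x - u0 f x) - \<epsilon> * u0 f x < 0"
    by (rule order_tendstoD(2))
  then show ?thesis
    by eventually_elim (simp add: algebra_simps)
qed

lemma gap_of_bounded_u0:
  assumes bdd: "\<And>x. X \<le> x \<Longrightarrow> u0 f x \<le> B" and lam: "1 < lam"
  shows "\<exists>\<delta>>0. \<forall>\<^sub>F x in at_top. \<forall>u\<ge>0. (lam * u0 f x \<le> u \<or> u \<le> u0 f x / lam) \<longrightarrow>
           omega f x + \<delta> * u0 f x \<le> h f u x - u * f u"
proof -
  obtain \<Omega> where "0 < \<Omega>" and u0_lim: "(u0 f \<longlongrightarrow> \<Omega>) at_top"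
    and omega_le: "\<And>x. X \<le> x \<Longrightarrow> omega f x \<le> \<Omega>"
    using bounded_u0_limits[OF bdd] by blast
  define \<delta> where "\<delta> = min 1 ((lam - 1) / 2)"
  have \<delta>_le: "\<delta> \<le> 1" "\<delta> \<le> (lam - 1) / 2"
    unfolding \<delta>_def by (rule min.cobounded1, rule min.cobounded2)
  have "\<Omega> / lam < \<Omega>"
    using lam \<open>0 < \<Omega>\<close> by (simp add: divide_less_eq)
  from eventually_happens'[OF _ eventually_conj[OF eventually_ge_at_top order_tendstoD(1)[OF u0_lim this]]]
  obtain y where "X \<le> y" "\<Omega> / lam < u0 f y"
    by auto
  have "0 < (lam - 1) / 2"
    using lam by simp
  then have close: "\<forall>\<^sub>F x in at_top. omega f x \<le> (1 + (lam - 1) / 2) * u0 f x"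
    using omega_le_eps_u0[where \<epsilon> = "(lam - 1) / 2"] bdd by blast
  have "\<forall>\<^sub>F x in at_top. \<forall>u\<ge>0. (lam * u0 f x \<le> u \<or> u \<le> u0 f x / lam) \<longrightarrow>
      omega f x + \<delta> * u0 f x \<le> h f u x - u * f u"
    using eventually_ge_at_top[of X] twice_omega_le_h_minus_small[OF \<open>X \<le> y\<close> \<open>\<Omega> / lam < u0 f y\<close>]
      twice_omega_le_h_minus_large close
  proof eventually_elim
    case (elim x)
    show ?case
    proof (intro allI impI)
      fix u :: real
      assume "0 \<le> u" and "lam * u0 f x \<le> u \<or> u \<le> u0 f x / lam"
      moreover have "u0 f x / lam \<le> \<Omega> / lam"
        using omega_le[OF elim(1)] u0_less_omega[OF elim(1)] lam by (simp add: divide_right_mono)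
      ultimately consider "u \<le> \<Omega> / lam" | "ln x \<le> u" | "lam * u0 f x \<le> u" "u \<le> ln x"
        by linarith
      then show "omega f x + \<delta> * u0 f x \<le> h f u x - u * f u"
      proof cases
        case 1
        then show ?thesis
          using elim(2) \<open>0 \<le> u\<close> gap_of_twice_omega[OF elim(1) \<delta>_le(1)] by simp
      next
        case 2
        then show ?thesis
          using elim(3) gap_of_twice_omega[OF elim(1) \<delta>_le(1)] by simp
      next
        case 3
        have "omega f x + (lam - 1) / 2 * u0 f x \<le> lam * u0 f x"
          using elim(4) by (simp add: field_simps)
        then show ?thesis
          using le_h_minus_of_le_ln[OF \<open>0 \<le> u\<close> 3(2)] 3(1) gap_weaken[OF elim(1) \<delta>_le(2)] by simp
      qed
    qed
  qed
  moreover have "0 < \<delta>"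
    using lam by (simp add: \<delta>_def)
  ultimately show ?thesis
    by blast
qed

lemma u0_filterlim_at_top:
  assumes "\<And>B. \<exists>x\<ge>X. B < u0 f x"
  shows "filterlim (u0 f) at_top at_top"
  unfolding filterlim_at_top
proof
  fix B
  obtain x where x: "X \<le> x" "B < u0 f x"
    using assms by blast
  show "\<forall>\<^sub>F y in at_top. B \<le> u0 f y"
    using eventually_ge_at_top[of x]
  proof eventually_elim
    case (elim y)
    then show ?case
      using u0_mono[OF x(1) elim] x(2) by linarith
  qed
qed

lemma deriv_at_u0:
  assumes "X \<le> x" "0 < u0 f x" "(f has_real_derivative d) (at (u0 f x))"
  shows "d * ln x = -1"
proof -
  have deriv: "((\<lambda>w. h f w x) has_real_derivative d * ln x + 1) (at (u0 f x))"
    unfolding h_def using assms(3) by (auto intro!: derivative_eq_intros)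
  have local_min: "\<forall>w. \<bar>u0 f x - w\<bar> < u0 f x \<longrightarrow> h f (u0 f x) x \<le> h f w x"
  proof (intro allI impI)
    fix w assume "\<bar>u0 f x - w\<bar> < u0 f x"
    then have "0 \<le> w"
      by linarith
    then show "h f (u0 f x) x \<le> h f w x"
      by (rule u0_minimal[OF assms(1)])
  qed
  have "d * ln x + 1 = 0"
    using DERIV_local_min[OF deriv assms(2) local_min] .
  then show ?thesis
    by simp
qed

lemma convex_on_h:
  assumes "convex_on {U<..} f" "X \<le> x"
  shows "convex_on {U<..} (\<lambda>w. h f w x)"
proof -
  have "convex_on {U<..} (\<lambda>w. ln x * f w + w)"
    using assms one_le_ln[OF assms(2)] by (intro convex_on_add convex_on_cmul) (auto simp: convex_on_ident)
  then show ?thesis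
    by (simp add: h_def mult.commute)
qed

lemma gain_above_u0:
  assumes "X \<le> x" "0 < u0 f x" "(f has_real_derivative f' (u0 f x)) (at (u0 f x))"
    and secant: "f (u0 f x) - f (lam * u0 f x) \<le> (1 - \<sigma>) * (lam - 1) * u0 f x * - f' (u0 f x)"
  shows "\<sigma> * (lam - 1) * u0 f x \<le> h f (lam * u0 f x) x - omega f x"
proof -
  define a where "a = u0 f x"
  have "(f a - f (lam * a)) * ln x \<le> ((1 - \<sigma>) * (lam - 1) * a * - f' a) * ln x"
    using secant one_le_ln[OF assms(1)] by (intro mult_right_mono) (simp_all add: a_def)
  also have "\<dots> = (1 - \<sigma>) * (lam - 1) * a * - (f' a * ln x)"
    by (simp add: algebra_simps)
  also have "f' a * ln x = -1"
    using deriv_at_u0[OF assms(1-3)] by (simp add: a_def)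
  finally show ?thesis
    using omega_eq[OF assms(1)] by (simp add: a_def h_def algebra_simps)
qed

lemma gain_below_u0:
  assumes "X \<le> x" "0 < u0 f x" "(f has_real_derivative f' (u0 f x)) (at (u0 f x))"
    and secant: "(1 + \<sigma>) * (1 - 1 / lam) * u0 f x * - f' (u0 f x) \<le> f (u0 f x / lam) - f (u0 f x)"
  shows "\<sigma> * (1 - 1 / lam) * u0 f x \<le> h f (u0 f x / lam) x - omega f x"
proof -
  define a where "a = u0 f x"
  have "(1 + \<sigma>) * (1 - 1 / lam) * a * - (f' a * ln x) = ((1 + \<sigma>) * (1 - 1 / lam) * a * - f' a) * ln x"
    by (simp add: algebra_simps)
  also have "\<dots> \<le> (f (a / lam) - f a) * ln x"
    using secant one_le_ln[OF assms(1)] by (intro mult_right_mono) (simp_all add: a_def)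
  also have "f' a * ln x = -1"
    using deriv_at_u0[OF assms(1-3)] by (simp add: a_def)
  finally show ?thesis
    using omega_eq[OF assms(1)] by (simp add: a_def h_def algebra_simps add_divide_distrib)
qed

lemma h_ge_chord_above_u0:
  assumes cvx: "convex_on {U<..} f" and x: "X \<le> x" "U < u0 f x" "0 < u0 f x"
    and lam: "1 < lam" "lam * u0 f x \<le> u"
    and gain: "\<sigma> * (lam - 1) * u0 f x \<le> h f (lam * u0 f x) x - omega f x"
  shows "omega f x + \<sigma> * (u - u0 f x) \<le> h f u x"
proof -
  define G where "G = (\<lambda>w. h f w x)"
  define a where "a = u0 f x"
  have a: "U < a" "a < lam * a" "lam * a \<le> u"
    using x lam by (simp_all add: a_def)
  have "\<sigma> \<le> (G (lam * a) - G a) / (lam * a - a)"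
    using gain a omega_eq[OF x(1)] by (simp add: pos_le_divide_eq G_def h_def a_def algebra_simps)
  also have "\<dots> \<le> (G u - G a) / (u - a)"
    unfolding G_def using convex_on_chord_slope_mono[OF convex_on_h[OF cvx x(1)]] a by simp
  finally have "\<sigma> * (u - a) \<le> G u - G a"
    using a by (simp add: pos_le_divide_eq mult.commute)
  then show ?thesis
    using omega_eq[OF x(1)] by (simp add: G_def h_def a_def)
qed

lemma h_ge_below_u0:
  assumes cvx: "convex_on {U<..} f" and x: "X \<le> x" and u: "U < u" "0 \<le> u" "u \<le> u0 f x / lam"
    and lam: "1 < lam"
  shows "h f (u0 f x / lam) x \<le> h f u x"
proof -
  define G where "G = (\<lambda>w. h f w x)"
  have "u0 f x / lam \<le> u0 f x"
    using mult_left_mono[of 1 lam "u0 f x"] u0_nonneg[OF x] lam by (simp add: divide_le_eq)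
  have "convex_on {u..u0 f x} G"
    unfolding G_def using u by (intro convex_on_subset[OF convex_on_h[OF cvx x]]) auto
  then have "G (u0 f x / lam) \<le> max (G u) (G (u0 f x))"
    using u \<open>u0 f x / lam \<le> u0 f x\<close> by (intro convex_on_le_max) auto
  also have "\<dots> = G u"
    using u0_minimal[OF x u(2)] by (simp add: G_def)
  finally show ?thesis
    by (simp add: G_def)
qed

lemma gap_above_u0:
  assumes u0_lim: "filterlim (u0 f) at_top at_top"
    and cvx: "convex_on {U<..} f" and der: "\<And>u. U < u \<Longrightarrow> (f has_real_derivative f' u) (at u)"
    and lam: "1 < lam" and \<sigma>: "0 < \<sigma>"
    and secant: "\<forall>\<^sub>F u in at_top. f u - f (lam * u) \<le> (1 - \<sigma>) * (lam - 1) * u * - f' u"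
  shows "\<forall>\<^sub>F x in at_top. \<forall>u\<ge>lam * u0 f x.
           omega f x + \<sigma> * (lam - 1) / 2 * u0 f x \<le> h f u x - u * f u"
proof -
  define \<eta> where "\<eta> = \<sigma> * (1 - 1 / lam) / 2"
  have "0 < \<eta>"
    using \<sigma> lam by (simp add: \<eta>_def)
  obtain N where N: "\<And>u. N \<le> u \<Longrightarrow> f u < \<eta>"
    using order_tendstoD(2)[OF tendsto_zero \<open>0 < \<eta>\<close>] by (auto simp: eventually_at_top_linorder)
  show ?thesis
    using eventually_ge_at_top[of X] filterlim_at_top_dense[THEN iffD1, OF u0_lim, rule_format, of "max (max U 0) N"]
      eventually_compose_filterlim[OF secant u0_lim]
  proof eventually_elim
    case (elim x)
    define a where "a = u0 f x"
    have a: "U < a" "0 < a" "N < a"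
      using elim(2) by (auto simp: a_def)
    note gain = gain_above_u0[where f' = f', OF elim(1) a(2)[unfolded a_def] der[OF a(1)[unfolded a_def]] elim(3)]
    show ?case
    proof (intro allI impI)
      fix u assume "lam * u0 f x \<le> u"
      then have "lam * a \<le> u"
        by (simp add: a_def)
      moreover have "a < lam * a"
        using a lam by simp
      ultimately have "a < u"
        by linarith
      have "\<sigma> * (u - u / lam) \<le> \<sigma> * (u - a)"
        using \<open>lam * a \<le> u\<close> lam \<sigma> by (intro mult_left_mono) (auto simp: field_simps)
      moreover have "\<sigma> * (u - u / lam) = 2 * (\<eta> * u)"
        by (simp add: \<eta>_def algebra_simps)
      moreover have "u * f u \<le> \<eta> * u"
        using mult_left_mono[of "f u" \<eta> u] N[of u] a \<open>a < u\<close> by (simp add: mult.commute)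
      moreover have "\<sigma> * (lam - 1) / 2 * a = \<eta> * (lam * a)"
        using lam by (simp add: \<eta>_def field_simps)
      moreover have "\<eta> * (lam * a) \<le> \<eta> * u"
        using \<open>lam * a \<le> u\<close> \<open>0 < \<eta>\<close> by simp
      moreover have "omega f x + \<sigma> * (u - a) \<le> h f u x"
        using h_ge_chord_above_u0[OF cvx elim(1) _ _ lam \<open>lam * u0 f x \<le> u\<close> gain] a by (simp add: a_def)
      ultimately show "omega f x + \<sigma> * (lam - 1) / 2 * u0 f x \<le> h f u x - u * f u"
        unfolding a_def by linarith
    qed
  qed
qed

lemma gap_below_u0:
  assumes u0_lim: "filterlim (u0 f) at_top at_top"
    and cvx: "convex_on {U<..} f" and der: "\<And>u. U < u \<Longrightarrow> (f has_real_derivative f' u) (at u)"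
    and anti: "\<And>u v. U < u \<Longrightarrow> u \<le> v \<Longrightarrow> f v \<le> f u"
    and T: "U < T" "0 \<le> T" and lam: "1 < lam" and \<sigma>: "0 < \<sigma>"
    and secant: "\<forall>\<^sub>F u in at_top. (1 + \<sigma>) * (1 - 1 / lam) * u * - f' u \<le> f (u / lam) - f u"
  shows "\<forall>\<^sub>F x in at_top. \<forall>u\<in>{T..u0 f x / lam}.
           omega f x + \<sigma> * (1 - 1 / lam) / 2 * u0 f x \<le> h f u x - u * f u"
proof -
  define \<tau> where "\<tau> = \<sigma> * (1 - 1 / lam)"
  have "0 < \<tau>"
    using \<sigma> lam by (simp add: \<tau>_def)
  obtain C where C: "\<And>u. T \<le> u \<Longrightarrow> u * f u \<le> \<tau> / 4 * u + C"
    using antimono_tendsto_zero_mult_le[of T f "\<tau> / 4"] anti T tendsto_zero \<open>0 < \<tau>\<close> by force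
  show ?thesis
    using eventually_ge_at_top[of X]
      filterlim_at_top_dense[THEN iffD1, OF u0_lim, rule_format, of "max (max U 0) (4 * C / \<tau>)"]
      eventually_compose_filterlim[OF secant u0_lim]
  proof eventually_elim
    case (elim x)
    define a where "a = u0 f x"
    have a: "U < a" "0 < a" "C \<le> \<tau> / 4 * a"
      using elim(2) \<open>0 < \<tau>\<close> by (auto simp: a_def field_simps)
    have gain: "\<tau> * a \<le> h f (a / lam) x - omega f x"
      using gain_below_u0[where f' = f', OF elim(1) a(2)[unfolded a_def] der[OF a(1)[unfolded a_def]] elim(3)]
      by (simp add: a_def \<tau>_def)
    show ?case
    proof
      fix u assume u: "u \<in> {T..u0 f x / lam}"
      moreover have "a / lam \<le> a"
        using mult_left_mono[of 1 lam a] a lam by (simp add: divide_le_eq)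
      ultimately have "u \<le> a"
        by (simp add: a_def)
      have "h f (a / lam) x \<le> h f u x"
        using h_ge_below_u0[OF cvx elim(1) _ _ _ lam] u T by (simp add: a_def)
      moreover have "u * f u \<le> \<tau> / 4 * u + C"
        using C u by simp
      moreover have "\<tau> / 4 * u \<le> \<tau> / 4 * a"
        using \<open>u \<le> a\<close> \<open>0 < \<tau>\<close> by simp
      ultimately have "omega f x + \<tau> / 2 * a \<le> h f u x - u * f u"
        using gain a(3) by (simp add: a_def)
      then show "omega f x + \<sigma> * (1 - 1 / lam) / 2 * u0 f x \<le> h f u x - u * f u"
        by (simp add: a_def \<tau>_def)
    qed
  qed
qed

lemma gap_of_unbounded_u0:
  assumes unbdd: "\<And>B. \<exists>x\<ge>X. B < u0 f x"
    and cvx: "convex_on {U<..} f" and der: "\<And>u. U < u \<Longrightarrow> (f has_real_derivative f' u) (at u)"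
    and anti: "\<And>u v. U < u \<Longrightarrow> u \<le> v \<Longrightarrow> f v \<le> f u"
    and lam: "1 < lam" and \<sigma>: "0 < \<sigma>\<^sub>1" "0 < \<sigma>\<^sub>2"
    and upper: "\<forall>\<^sub>F u in at_top. f u - f (lam * u) \<le> (1 - \<sigma>\<^sub>1) * (lam - 1) * u * - f' u"
    and lower: "\<forall>\<^sub>F u in at_top. (1 + \<sigma>\<^sub>2) * (1 - 1 / lam) * u * - f' u \<le> f (u / lam) - f u"
  shows "\<exists>\<delta>>0. \<forall>\<^sub>F x in at_top. \<forall>u\<ge>0. (lam * u0 f x \<le> u \<or> u \<le> u0 f x / lam) \<longrightarrow>
           omega f x + \<delta> * u0 f x \<le> h f u x - u * f u"
proof -
  define T where "T = max U 0 + 1"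
  define \<delta> where "\<delta> = min 1 (min (\<sigma>\<^sub>1 * (lam - 1) / 2) (\<sigma>\<^sub>2 * (1 - 1 / lam) / 2))"
  have \<delta>_le: "\<delta> \<le> 1" "\<delta> \<le> \<sigma>\<^sub>1 * (lam - 1) / 2" "\<delta> \<le> \<sigma>\<^sub>2 * (1 - 1 / lam) / 2"
    unfolding \<delta>_def by linarith+
  have T: "U < T" "0 \<le> T"
    by (simp_all add: T_def)
  have u0_lim: "filterlim (u0 f) at_top at_top"
    using unbdd by (rule u0_filterlim_at_top)
  obtain y where "X \<le> y" "T < u0 f y"
    using unbdd by blast
  have small: "\<forall>\<^sub>F x in at_top. \<forall>u\<in>{0..T}. 2 * omega f x \<le> h f u x - u * f u"
    by (rule twice_omega_le_h_minus_small[OF \<open>X \<le> y\<close> \<open>T < u0 f y\<close>])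
  have above: "\<forall>\<^sub>F x in at_top. \<forall>u\<ge>lam * u0 f x.
      omega f x + \<sigma>\<^sub>1 * (lam - 1) / 2 * u0 f x \<le> h f u x - u * f u"
    by (rule gap_above_u0[OF u0_lim cvx der lam \<sigma>(1) upper])
  have below: "\<forall>\<^sub>F x in at_top. \<forall>u\<in>{T..u0 f x / lam}.
      omega f x + \<sigma>\<^sub>2 * (1 - 1 / lam) / 2 * u0 f x \<le> h f u x - u * f u"
    by (rule gap_below_u0[OF u0_lim cvx der anti T lam \<sigma>(2) lower])
  have "\<forall>\<^sub>F x in at_top. \<forall>u\<ge>0. (lam * u0 f x \<le> u \<or> u \<le> u0 f x / lam) \<longrightarrow>
      omega f x + \<delta> * u0 f x \<le> h f u x - u * f u"
    using eventually_ge_at_top[of X] small above below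
  proof eventually_elim
    case (elim x)
    show ?case
    proof (intro allI impI)
      fix u :: real
      assume "0 \<le> u" and "lam * u0 f x \<le> u \<or> u \<le> u0 f x / lam"
      then consider "lam * u0 f x \<le> u" | "u \<le> T" | "T \<le> u" "u \<le> u0 f x / lam"
        by linarith
      then show "omega f x + \<delta> * u0 f x \<le> h f u x - u * f u"
      proof cases
        case 1
        then show ?thesis
          using elim(3) gap_weaken[OF elim(1) \<delta>_le(2)] by simp
      next
        case 2
        then show ?thesis
          using elim(2) \<open>0 \<le> u\<close> gap_of_twice_omega[OF elim(1) \<delta>_le(1)] by simp
      next
        case 3
        then show ?thesis
          using elim(4) gap_weaken[OF elim(1) \<delta>_le(3)] by simp
      qed
    qed
  qed
  moreover have "0 < \<delta>"
    using lam \<sigma> by (simp add: \<delta>_def)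
  ultimately show ?thesis
    by blast
qed

lemma gap_eventually:
  assumes cvx: "convex_on {U<..} f" and der: "\<And>u. U < u \<Longrightarrow> (f has_real_derivative f' u) (at u)"
    and anti: "\<And>u v. U < u \<Longrightarrow> u \<le> v \<Longrightarrow> f v \<le> f u"
    and lam: "1 < lam" and \<sigma>: "0 < \<sigma>\<^sub>1" "0 < \<sigma>\<^sub>2"
    and upper: "\<forall>\<^sub>F u in at_top. f u - f (lam * u) \<le> (1 - \<sigma>\<^sub>1) * (lam - 1) * u * - f' u"
    and lower: "\<forall>\<^sub>F u in at_top. (1 + \<sigma>\<^sub>2) * (1 - 1 / lam) * u * - f' u \<le> f (u / lam) - f u"
  shows "\<exists>\<delta>>0. \<forall>\<^sub>F x in at_top. \<forall>u\<ge>0. (lam * u0 f x \<le> u \<or> u \<le> u0 f x / lam) \<longrightarrow>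
           omega f x + \<delta> * u0 f x \<le> h f u x - u * f u"
proof (cases "\<exists>B. \<forall>x\<ge>X. u0 f x \<le> B")
  case True
  then show ?thesis
    using gap_of_bounded_u0[OF _ lam] by blast
next
  case False
  then show ?thesis
    using gap_of_unbounded_u0[OF _ cvx der anti lam \<sigma> upper lower] by (meson not_le)
qed

end

theorem lemma2p1:
  fixes f :: "real \<Rightarrow> real"
  assumes pos: "\<forall>u\<ge>0. f u > 0"
    and lim0: "(f \<longlongrightarrow> 0) at_top"
    and eventually_nice: "\<exists>U\<ge>0. (\<forall>u>U. f differentiable (at u))
            \<and> continuous_on {U<..} (deriv f)
            \<and> (\<forall>u v. U < u \<and> u \<le> v \<longrightarrow> f v \<le> f u)
            \<and> strictly_convex_on {U<..} f"
    and variation: "(\<exists>\<alpha>. 0 < \<alpha> \<and> \<alpha> \<le> 1 \<and> regularly_varying \<alpha> f)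
            \<or> (slowly_varying f \<and>
               (\<forall>\<delta>>0. Limsup at_top
                  (\<lambda>u. ereal (\<bar>deriv f ((1 + \<delta>) * u)\<bar> / \<bar>deriv f u\<bar>)) < 1))"
    and u0_unique: "\<forall>\<^sub>F x in at_top. \<exists>!u. u \<ge> 0 \<and> (\<forall>v\<ge>0. h f u x \<le> h f v x)"
  shows "\<forall>lam>1. \<exists>\<delta>>0. \<exists>x0\<ge>1. \<forall>x\<ge>x0. \<forall>u\<ge>0.
           (u \<ge> lam * u0 f x \<or> u \<le> u0 f x / lam) \<longrightarrow>
           h f u x - u * f u \<ge> omega f x + \<delta> * u0 f x"
proof (intro allI impI)
  fix lam :: real
  assume lam: "1 < lam"
  obtain U where diff: "\<And>u. U < u \<Longrightarrow> f differentiable (at u)"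
    and anti: "\<And>u v. U < u \<Longrightarrow> u \<le> v \<Longrightarrow> f v \<le> f u" and sc: "strictly_convex_on {U<..} f"
    using eventually_nice by blast
  have cvx: "convex_on {U<..} f"
    using sc by (rule strictly_convex_on_imp_convex_on)
  have der: "(f has_real_derivative deriv f u) (at u)" if "U < u" for u
    using diff[OF that] by (simp add: DERIV_deriv_iff_real_differentiable)
  have tangent: "f u + deriv f u * (v - u) \<le> f v" if "U < u" "U < v" for u v
    using convex_on_ray_above_tangent[OF cvx that der[OF that(1)]] .
  have neg: "deriv f u < 0" if "U < u" for u
    using strictly_convex_antimono_deriv_neg[OF sc anti[OF that] that der[OF that]] .
  have "\<forall>\<^sub>F u in at_top. 0 < f u"
    using eventually_ge_at_top[of 0] by eventually_elim (simp add: pos)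
  moreover have "(\<exists>\<alpha>>0. regularly_varying \<alpha> f)
      \<or> (\<forall>\<delta>>0. Limsup at_top (\<lambda>u. ereal (\<bar>deriv f ((1 + \<delta>) * u)\<bar> / \<bar>deriv f u\<bar>)) < 1)"
    using variation by blast
  ultimately obtain \<sigma>\<^sub>1 \<sigma>\<^sub>2 where \<sigma>: "0 < \<sigma>\<^sub>1" "0 < \<sigma>\<^sub>2"
    and upper: "\<forall>\<^sub>F u in at_top. f u - f (lam * u) \<le> (1 - \<sigma>\<^sub>1) * (lam - 1) * u * - deriv f u"
    and lower: "\<forall>\<^sub>F u in at_top. (1 + \<sigma>\<^sub>2) * (1 - 1 / lam) * u * - deriv f u \<le> f (u / lam) - f u"
    using secant_bounds_of_variation[OF _ _ tangent neg lam] by blast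
  obtain X0 where X0: "\<And>x. X0 \<le> x \<Longrightarrow> \<exists>!u. 0 \<le> u \<and> (\<forall>v\<ge>0. h f u x \<le> h f v x)"
    using u0_unique by (auto simp: eventually_at_top_linorder)
  interpret u0_minimising f "max X0 (exp 1)"
    using pos lim0 u0_minimiser X0 by unfold_locales auto
  show "\<exists>\<delta>>0. \<exists>x0\<ge>1. \<forall>x\<ge>x0. \<forall>u\<ge>0. (u \<ge> lam * u0 f x \<or> u \<le> u0 f x / lam) \<longrightarrow>
      h f u x - u * f u \<ge> omega f x + \<delta> * u0 f x"
    using gap_eventually[OF cvx der anti lam \<sigma> upper lower] eventually_at_top_imp_ex_ge by blast
qed

end
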